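(* Let $p$ be an odd prime, $x\in\mathbb Z_p$ and $x\not\equiv-1\pmod p$. Then $$P_{\frac{p-1}2}(x)\equiv\Big(\frac{2(x+1)}p\Big)P_{\frac{p-1}2}\Big(\frac{3-x}{1+x}\Big)\pmod p.$$
   Context: $\mathbb Z_p$ denotes the set of rational numbers whose denominator (in lowest terms) is prime to $p$; congruences are in this ring. $P_n(x)$ is the $n$-th Legendre polynomial, defined by $\frac1{\sqrt{1-2xt+t^2}}=\sum_{n\ge0}P_n(x)t^n$, equivalently $P_n(x)=\frac1{2^n}\sum_{k=0}^{[n/2]}\frac{(-1)^k(2n-2k)!}{k!(n-k)!(n-2k)!}x^{n-2k}$. For $a\in\mathbb Z_p$, $\big(\frac ap\big)$ is the Legendre symbol of the residue of $a$ modulo $p$. *)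

theory Defs
  imports "HOL-Number_Theory.Number_Theory"
begin

text \<open>Z_p: rationals whose reduced denominator is prime to p.\<close>
definition in_Zp :: "int \<Rightarrow> rat \<Rightarrow> bool" where
  "in_Zp p q \<longleftrightarrow> coprime (snd (quotient_of q)) p"

definition cong_Zp :: "rat \<Rightarrow> rat \<Rightarrow> int \<Rightarrow> bool" where
  "cong_Zp a b p \<longleftrightarrow> in_Zp p ((a - b) / of_int p)"

definition Legendre_Zp :: "rat \<Rightarrow> int \<Rightarrow> int" where
  "Legendre_Zp a p = Legendre (SOME r :: int. cong_Zp a (of_int r) p) p"

definition legendre_P :: "nat \<Rightarrow> rat \<Rightarrow> rat" where
  "legendre_P n x = (1 / 2 ^ n) * (\<Sum>k = 0..n div 2.
      (-1) ^ k * of_nat (fact (2*n - 2*k)) /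
      (of_nat (fact k) * of_nat (fact (n - k)) * of_nat (fact (n - 2*k))) * x ^ (n - 2*k))"

end

theory Submission
  imports Defs "HOL-Computational_Algebra.Polynomial"
begin

text \<open>
  Let n = (p - 1) / 2. Up to the factor 2^n, P_n(z) is the coefficient of t^n in
  (t + z - 1)^n (t + z + 1)^n. Expanding this product around z - 1 gives
  \<Sum> C(n,i) 2^(n-i) C(n+i,i) (z-1)^i, and since n \<equiv> -1/2 (mod p) we have
  C(n+i,i) \<equiv> (-1)^i C(n,i), whence 2^n P_n(x) \<equiv> \<Sum> C(n,i)^2 2^(n-i) (1-x)^i.
  The symmetric expansion \<Sum> C(n,i)^2 (z+1)^(n-i) (z-1)^i, evaluated at
  y = (3 - x)/(1 + x), shows that the same sum equals (1 + x)^n P_n(y) exactly.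
  Multiplying 2^n P_n(x) \<equiv> (1 + x)^n P_n(y) by 2^n, Fermat (4^n \<equiv> 1) and
  Euler's criterion ((2(1 + x))^n \<equiv> (2(1 + x) / p)) give the theorem.
\<close>

section \<open>Arithmetic in Z_p\<close>

lemma in_Zp_iff:
  assumes "prime p"
  shows "in_Zp p q \<longleftrightarrow> (\<exists>a b. coprime b p \<and> q = of_int a / of_int b)"
proof
  assume "in_Zp p q"
  then show "\<exists>a b. coprime b p \<and> q = of_int a / of_int b"
    unfolding in_Zp_def by (metis prod.collapse quotient_of_div)
next
  assume "\<exists>a b. coprime b p \<and> q = of_int a / of_int b"
  then obtain a b where ab: "coprime b p" "q = of_int a / of_int b" by blast
  obtain a' b' where qo: "quotient_of q = (a', b')" by (cases "quotient_of q")
  have "b \<noteq> 0" using ab(1) assms by (metis coprime_0_left_iff not_prime_unit)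
  moreover have "b' > 0" using quotient_of_denom_pos[OF qo] .
  moreover have "of_int a' / of_int b' = (of_int a / of_int b :: rat)"
    using quotient_of_div[OF qo] ab(2) by simp
  ultimately have "of_int (a' * b) = (of_int (a * b') :: rat)" by (simp add: field_simps)
  then have "a' * b = a * b'" by (simp only: of_int_eq_iff)
  then have "b' dvd a' * b" by simp
  then have "b' dvd b"
    using quotient_of_coprime[OF qo] by (metis coprime_commute coprime_dvd_mult_right_iff)
  then have "coprime b' p" using ab(1) by (meson coprime_commute coprime_divisors dvd_refl)
  then show "in_Zp p q" unfolding in_Zp_def qo by simp
qed

context
  fixes p :: int
  assumes p: "prime p"
begin

lemma Zp_of_int: "in_Zp p (of_int a)"
  using in_Zp_iff[OF p] by (metis coprime_1_left div_by_1 of_int_1)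

lemma Zp_of_nat: "in_Zp p (of_nat k)"
  using Zp_of_int[of "int k"] by simp

lemma Zp_one: "in_Zp p 1"
  using Zp_of_int[of 1] by simp

lemma Zp_numeral: "in_Zp p (numeral k)"
  using Zp_of_int[of "numeral k"] by simp

lemma Zp_add: "in_Zp p u \<Longrightarrow> in_Zp p v \<Longrightarrow> in_Zp p (u + v)"
proof -
  assume "in_Zp p u" "in_Zp p v"
  then obtain a b c d where h: "coprime b p" "u = of_int a / of_int b"
      "coprime d p" "v = of_int c / of_int d"
    using in_Zp_iff[OF p] by meson
  have "b \<noteq> 0" "d \<noteq> 0" using h p by (metis coprime_0_left_iff not_prime_unit)+
  then have "u + v = of_int (a * d + c * b) / of_int (b * d)" using h by (simp add: field_simps)
  moreover have "coprime (b * d) p" using h by simp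
  ultimately show ?thesis using in_Zp_iff[OF p] by blast
qed

lemma Zp_mult: "in_Zp p u \<Longrightarrow> in_Zp p v \<Longrightarrow> in_Zp p (u * v)"
proof -
  assume "in_Zp p u" "in_Zp p v"
  then obtain a b c d where h: "coprime b p" "u = of_int a / of_int b"
      "coprime d p" "v = of_int c / of_int d"
    using in_Zp_iff[OF p] by meson
  then have "u * v = of_int (a * c) / of_int (b * d)" by simp
  moreover have "coprime (b * d) p" using h by simp
  ultimately show ?thesis using in_Zp_iff[OF p] by blast
qed

lemma Zp_uminus: "in_Zp p u \<Longrightarrow> in_Zp p (- u)"
  using Zp_mult[OF Zp_of_int[of "-1"]] by simp

lemma Zp_diff: "in_Zp p u \<Longrightarrow> in_Zp p v \<Longrightarrow> in_Zp p (u - v)"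
  using Zp_add Zp_uminus by (metis diff_conv_add_uminus)

lemma Zp_power: "in_Zp p u \<Longrightarrow> in_Zp p (u ^ k)"
  by (induction k) (auto intro: Zp_mult simp: Zp_of_int[of 1, simplified])

lemma Zp_sum: "(\<And>i. i \<in> A \<Longrightarrow> in_Zp p (f i)) \<Longrightarrow> in_Zp p (\<Sum>i\<in>A. f i)"
  by (induction A rule: infinite_finite_induct) (auto intro: Zp_add simp: Zp_of_int[of 0, simplified])

lemma cong_Zp_refl: "cong_Zp a a p"
  unfolding cong_Zp_def using Zp_of_int[of 0] by simp

lemma cong_Zp_trans:
  assumes "cong_Zp a b p" and "cong_Zp b c p"
  shows "cong_Zp a c p"
proof -
  have split: "(a - c) / of_int p = (a - b) / of_int p + (b - c) / of_int p"
    by (simp add: diff_divide_distrib)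
  show ?thesis
    unfolding cong_Zp_def split by (rule Zp_add[OF assms[unfolded cong_Zp_def]])
qed

lemma cong_Zp_add:
  assumes "cong_Zp a b p" and "cong_Zp c d p"
  shows "cong_Zp (a + c) (b + d) p"
proof -
  have split: "(a + c - (b + d)) / of_int p = (a - b) / of_int p + (c - d) / of_int p"
    by (simp add: diff_divide_distrib add_divide_distrib)
  show ?thesis
    unfolding cong_Zp_def split by (rule Zp_add[OF assms[unfolded cong_Zp_def]])
qed

lemma cong_Zp_mult_left:
  assumes "in_Zp p c" and "cong_Zp a b p"
  shows "cong_Zp (c * a) (c * b) p"
proof -
  have factor: "(c * a - c * b) / of_int p = c * ((a - b) / of_int p)" by (simp add: algebra_simps)
  show ?thesis
    unfolding cong_Zp_def factor by (rule Zp_mult[OF assms[unfolded cong_Zp_def]])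
qed

lemma cong_Zp_mult:
  "in_Zp p a \<Longrightarrow> in_Zp p d \<Longrightarrow> cong_Zp a b p \<Longrightarrow> cong_Zp c d p \<Longrightarrow> cong_Zp (a * c) (b * d) p"
  using cong_Zp_trans cong_Zp_mult_left by (metis mult.commute)

lemma cong_Zp_power:
  "in_Zp p a \<Longrightarrow> in_Zp p b \<Longrightarrow> cong_Zp a b p \<Longrightarrow> cong_Zp (a ^ k) (b ^ k) p"
  by (induction k) (auto intro: cong_Zp_mult Zp_power cong_Zp_refl)

lemma cong_Zp_sum:
  "(\<And>i. i \<in> A \<Longrightarrow> cong_Zp (f i) (g i) p) \<Longrightarrow> cong_Zp (\<Sum>i\<in>A. f i) (\<Sum>i\<in>A. g i) p"
  by (induction A rule: infinite_finite_induct) (auto intro: cong_Zp_add cong_Zp_refl)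

lemma cong_Zp_of_int_iff: "cong_Zp (of_int a) (of_int b) p \<longleftrightarrow> [a = b] (mod p)"
proof -
  have p0: "p \<noteq> 0" using p by auto
  have "in_Zp p (of_int (a - b) / of_int p) \<longleftrightarrow> p dvd (a - b)"
  proof
    assume "in_Zp p (of_int (a - b) / of_int p)"
    then obtain c d where h: "coprime d p" "of_int (a - b) / of_int p = (of_int c / of_int d :: rat)"
      using in_Zp_iff[OF p] by meson
    have "d \<noteq> 0" using h p by (metis coprime_0_left_iff not_prime_unit)
    then have "of_int ((a - b) * d) = (of_int (c * p) :: rat)" using h(2) p0 by (simp add: field_simps)
    then have "(a - b) * d = c * p" by (simp only: of_int_eq_iff)
    then have "p dvd (a - b) * d" by simp
    moreover have "\<not> p dvd d" using h(1) p by (metis coprime_common_divisor dvd_refl not_prime_unit)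
    ultimately show "p dvd (a - b)" using p prime_dvd_mult_iff by blast
  next
    assume "p dvd (a - b)"
    then obtain k where "a - b = p * k" by blast
    then have "of_int (a - b) / of_int p = (of_int k :: rat)" using p0 by simp
    then show "in_Zp p (of_int (a - b) / of_int p)" using Zp_of_int by simp
  qed
  then show ?thesis unfolding cong_Zp_def cong_iff_dvd_diff by simp
qed

lemma Zp_inverse: "in_Zp p u \<Longrightarrow> \<not> cong_Zp u 0 p \<Longrightarrow> in_Zp p (inverse u)"
proof -
  assume u: "in_Zp p u" "\<not> cong_Zp u 0 p"
  then obtain a b where h: "coprime b p" "u = of_int a / of_int b"
    using in_Zp_iff[OF p] by meson
  have "\<not> p dvd a"
  proof
    assume "p dvd a"
    then obtain c where "a = p * c" by blast
    then have "(u - 0) / of_int p = of_int c / of_int b" using h(2) p by (auto simp: prime_int_iff)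
    then have "cong_Zp u 0 p" unfolding cong_Zp_def using in_Zp_iff[OF p] h(1) by blast
    then show False using u(2) by contradiction
  qed
  then have "coprime a p" using prime_imp_coprime[OF p] coprime_commute by blast
  moreover have "inverse u = of_int b / of_int a" using h(2) by simp
  ultimately show ?thesis using in_Zp_iff[OF p] by blast
qed

lemma Zp_divide: "in_Zp p u \<Longrightarrow> in_Zp p v \<Longrightarrow> \<not> cong_Zp v 0 p \<Longrightarrow> in_Zp p (u / v)"
  using Zp_mult Zp_inverse by (simp add: divide_inverse)

lemma Zp_cong_of_int_exists: "in_Zp p q \<Longrightarrow> \<exists>r. cong_Zp q (of_int r) p"
proof -
  assume "in_Zp p q"
  then obtain a b where h: "coprime b p" "q = of_int a / of_int b"
    using in_Zp_iff[OF p] by meson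
  obtain u v where uv: "u * b + v * p = 1"
    using h(1) by (metis bezout_int coprime_iff_gcd_eq_1)
  have b0: "b \<noteq> 0" using h p by (metis coprime_0_left_iff not_prime_unit)
  have uv': "1 - of_int u * of_int b = (of_int v * of_int p :: rat)"
    using uv by (metis add_diff_cancel_left' of_int_add of_int_mult of_int_1)
  have "q - of_int (a * u) = of_int a * (1 - of_int u * of_int b) / of_int b"
    using h(2) b0 by (simp add: field_simps)
  also have "\<dots> = of_int (a * v) * of_int p / of_int b"
    unfolding uv' by simp
  finally have "(q - of_int (a * u)) / of_int p = of_int (a * v) / of_int b"
    using p by (auto simp: prime_int_iff)
  then show ?thesis unfolding cong_Zp_def using in_Zp_iff[OF p] h by blast
qed

end

section \<open>Congruences modulo p = 2n + 1\<close>

lemma cong_Zp_Legendre_Zp: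
  fixes p :: int
  assumes p: "prime p" "odd p" and a: "in_Zp p a"
  shows "cong_Zp (a ^ nat ((p - 1) div 2)) (of_int (Legendre_Zp a p)) p"
proof -
  define r where "r = (SOME r :: int. cong_Zp a (of_int r) p)"
  define m where "m = nat ((p - 1) div 2)"
  have r: "cong_Zp a (of_int r) p"
    unfolding r_def by (rule someI_ex[OF Zp_cong_of_int_exists[OF p(1) a]])
  have "p \<noteq> 2" using p(2) by auto
  then have "2 < p" using prime_gt_1_int[OF p(1)] by linarith
  then have p_nat: "int (nat p) = p" "2 < nat p" "(nat p - 1) div 2 = m"
    unfolding m_def by (simp_all add: nat_div_distrib nat_diff_distrib')
  have "prime (nat p)" using p(1) p_nat(1) by (metis prime_int_nat_transfer)
  have "cong_Zp (a ^ m) (of_int r ^ m) p"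
    by (rule cong_Zp_power[OF p(1) a Zp_of_int[OF p(1)] r])
  moreover have "[Legendre r p = r ^ m] (mod p)"
    using euler_criterion[OF \<open>prime (nat p)\<close> p_nat(2), of r] unfolding p_nat(1,3) .
  then have "cong_Zp (of_int r ^ m) (of_int (Legendre r p)) p"
    unfolding of_int_power[symmetric] cong_Zp_of_int_iff[OF p(1)] by (rule cong_sym)
  ultimately show ?thesis
    unfolding Legendre_Zp_def r_def m_def by (rule cong_Zp_trans[OF p(1)])
qed

lemma four_power_half_prime_cong:
  fixes p :: int
  assumes p: "prime p" "p = 2 * int n + 1"
  shows "[4 ^ n = 1] (mod p)"
proof -
  have p_nat: "int (nat p) = p" using p(2) by simp
  then have "prime (nat p)" using p(1) by (metis prime_int_nat_transfer)
  moreover have "\<not> nat p dvd 2"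
  proof
    assume "nat p dvd 2"
    then have "nat p \<le> 2" by (simp add: dvd_imp_le)
    then show False using p by (cases n) auto
  qed
  ultimately have "[2 ^ (nat p - 1) = 1] (mod nat p)" by (rule fermat_theorem)
  moreover have "nat p - 1 = 2 * n" using p(2) by simp
  ultimately have "[4 ^ n = 1] (mod nat p)" by (simp add: power_mult)
  then have "[int (4 ^ n) = int 1] (mod int (nat p))" by (simp only: cong_int_iff)
  then show ?thesis unfolding p_nat by simp
qed

lemma binomial_half_prime_cong:
  fixes p :: int
  assumes p: "prime p" "p = 2 * int n + 1" and "i \<le> n"
  shows "[int (n + i choose i) = (-1) ^ i * int (n choose i)] (mod p)"
  using \<open>i \<le> n\<close>
proof (induction i)
  case 0
  then show ?case by simp
next
  case (Suc i)
  have "Suc i * (n + Suc i choose Suc i) = (n + Suc i) * (n + i choose i)"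
    using Suc_times_binomial_eq[of "n + i" i] by (metis add_Suc_right mult.commute)
  then have rec_add: "int (Suc i) * int (n + Suc i choose Suc i) = int (n + Suc i) * int (n + i choose i)"
    by (metis of_nat_mult)
  have "Suc i * (n choose Suc i) = (n - i) * (n choose i)"
    using binomial_absorption[of i n] binomial_absorb_comp[of n i] by simp
  then have rec_n: "int (Suc i) * int (n choose Suc i) = (int n - int i) * int (n choose i)"
    using Suc.prems by (metis Suc_leD of_nat_diff of_nat_mult)
  have "int (Suc i) * ((-1) ^ Suc i * int (n choose Suc i)) =
      - ((-1) ^ i * (int (Suc i) * int (n choose Suc i)))"
    by (simp add: algebra_simps)
  then have rec_sign: "int (Suc i) * ((-1) ^ Suc i * int (n choose Suc i)) =
      - (int n - int i) * ((-1) ^ i * int (n choose i))"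
    unfolding rec_n by (simp add: algebra_simps)
  have "int (n + Suc i) - (- (int n - int i)) = p" using p(2) by simp
  then have "[int (n + Suc i) = - (int n - int i)] (mod p)"
    unfolding cong_iff_dvd_diff by simp
  moreover have "[int (n + i choose i) = (-1) ^ i * int (n choose i)] (mod p)"
    using Suc by simp
  ultimately have "[int (n + Suc i) * int (n + i choose i) =
      - (int n - int i) * ((-1) ^ i * int (n choose i))] (mod p)"
    by (rule cong_mult)
  then have "[int (Suc i) * int (n + Suc i choose Suc i) =
      int (Suc i) * ((-1) ^ Suc i * int (n choose Suc i))] (mod p)"
    unfolding rec_add rec_sign .
  moreover have "\<not> p dvd int (Suc i)"
    using Suc.prems p(2) by (auto dest: zdvd_imp_le)
  then have "coprime (int (Suc i)) p"
    using prime_imp_coprime[OF p(1)] coprime_commute by blast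
  ultimately show ?case using cong_mult_lcancel by blast
qed

section \<open>Expansions of Legendre polynomials\<close>

lemma coeff_monic_linear_power:
  "coeff ([:a, 1:] ^ m) i = of_nat (m choose i) * (a :: 'a :: comm_ring_1) ^ (m - i)"
proof (cases "i \<le> m")
  case True
  then show ?thesis using coeff_linear_poly_power[OF True, of a 1] by simp
next
  case False
  then have "coeff ([:a, 1:] ^ m) i = 0" by (intro coeff_eq_0) (simp add: degree_linear_power)
  then show ?thesis using False by (simp add: binomial_eq_0)
qed

lemma coeff_monic_linear_powers_mult:
  "coeff ([:a, 1:] ^ n * [:b, 1:] ^ n) n =
     (\<Sum>i\<le>n. of_nat ((n choose i)\<^sup>2) * a ^ (n - i) * (b :: 'a :: comm_ring_1) ^ i)"
  unfolding coeff_mult coeff_monic_linear_power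
  by (intro sum.cong refl) (simp add: binomial_symmetric[symmetric] power2_eq_square algebra_simps)

lemma coeff_monic_linear_powers_mult_shift:
  "coeff ([:a, 1:] ^ n * [:a + c, 1:] ^ n) n =
     (\<Sum>i\<le>n. of_nat (n choose i) * c ^ (n - i) * of_nat (n + i choose i) * (a :: 'a :: comm_ring_1) ^ i)"
proof -
  have shift: "[:a + c, 1:] = [:a, 1:] + [:c:]" by simp
  have "[:a, 1:] ^ n * [:a + c, 1:] ^ n =
      (\<Sum>k\<le>n. smult (c ^ (n - k) * of_nat (n choose k)) ([:a, 1:] ^ (n + k)))"
    unfolding shift binomial_ring sum_distrib_left
    by (intro sum.cong refl) (simp add: of_nat_poly power_add poly_const_pow mult.commute[of _ "[:_:]"])
  moreover have "(n + k choose n) = (n + k choose k)" for k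
    using binomial_symmetric[of k "n + k"] by simp
  ultimately show ?thesis by (simp add: coeff_sum coeff_monic_linear_power algebra_simps)
qed

lemma legendre_P_eq_coeff:
  "2 ^ n * legendre_P n z = coeff ([:z - 1, 1:] ^ n * [:z + 1, 1:] ^ n) n"
proof -
  have square: "[:z - 1, 1:] * [:z + 1, 1:] = [:-1:] + [:z, 1:] ^ 2"
    by (simp add: power2_eq_square algebra_simps)
  have "[:z - 1, 1:] ^ n * [:z + 1, 1:] ^ n =
      (\<Sum>k\<le>n. smult ((-1) ^ k * of_nat (n choose k)) ([:z, 1:] ^ (2 * (n - k))))"
    unfolding power_mult_distrib[symmetric] square binomial_ring
    by (intro sum.cong refl)
      (simp add: of_nat_poly power_mult[symmetric] poly_const_pow mult.commute[of _ "[:_:]"])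
  then have expand: "coeff ([:z - 1, 1:] ^ n * [:z + 1, 1:] ^ n) n =
      (\<Sum>k\<le>n. of_nat (n choose k) * (-1) ^ k * (of_nat (2 * (n - k) choose n) * z ^ (2 * (n - k) - n)))"
    by (simp add: coeff_sum coeff_monic_linear_power mult_ac)
  have "2 ^ n * legendre_P n z = (\<Sum>k = 0..n div 2.
      (-1) ^ k * of_nat (fact (2 * n - 2 * k)) /
      (of_nat (fact k) * of_nat (fact (n - k)) * of_nat (fact (n - 2 * k))) * z ^ (n - 2 * k))"
    unfolding legendre_P_def by simp
  also have "\<dots> = (\<Sum>k = 0..n div 2.
      of_nat (n choose k) * (-1) ^ k * (of_nat (2 * (n - k) choose n) * z ^ (2 * (n - k) - n)))"
  proof (intro sum.cong refl)
    fix k assume "k \<in> {0..n div 2}"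
    then have k: "k \<le> n" "n \<le> 2 * (n - k)" "2 * (n - k) - n = n - 2 * k"
      by auto
    have choose_n: "(of_nat (n choose k) :: rat) = fact n / (fact k * fact (n - k))"
      by (rule binomial_fact[OF k(1)])
    have choose_2n: "(of_nat (2 * (n - k) choose n) :: rat) = fact (2 * n - 2 * k) / (fact n * fact (n - 2 * k))"
      using binomial_fact[OF k(2), where 'a = rat] k by (simp add: right_diff_distrib')
    show "(-1) ^ k * of_nat (fact (2 * n - 2 * k)) /
        (of_nat (fact k) * of_nat (fact (n - k)) * of_nat (fact (n - 2 * k))) * z ^ (n - 2 * k) =
        of_nat (n choose k) * (-1) ^ k * (of_nat (2 * (n - k) choose n) * z ^ (2 * (n - k) - n))"
      unfolding choose_n choose_2n k(3) by (simp add: field_simps)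
  qed
  \<comment> \<open>the terms with k > n div 2 vanish because then 2 * (n - k) < n\<close>
  also have "\<dots> = (\<Sum>k\<le>n.
      of_nat (n choose k) * (-1) ^ k * (of_nat (2 * (n - k) choose n) * z ^ (2 * (n - k) - n)))"
    by (rule sum.mono_neutral_left) (auto simp: binomial_eq_0)
  finally show ?thesis unfolding expand .
qed

lemma legendre_P_sum_squares:
  "2 ^ n * legendre_P n z = (\<Sum>i\<le>n. of_nat ((n choose i)\<^sup>2) * (z + 1) ^ (n - i) * (z - 1) ^ i)"
  unfolding legendre_P_eq_coeff mult.commute[of "[:z - 1, 1:] ^ n"]
  by (rule coeff_monic_linear_powers_mult)

lemma legendre_P_sum_shift:
  "2 ^ n * legendre_P n z = (\<Sum>i\<le>n. of_nat (n choose i) * 2 ^ (n - i) * of_nat (n + i choose i) * (z - 1) ^ i)"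
proof -
  have "z + 1 = (z - 1) + 2" by simp
  then show ?thesis unfolding legendre_P_eq_coeff by (simp only: coeff_monic_linear_powers_mult_shift)
qed

lemma legendre_P_moebius:
  assumes "x \<noteq> -1"
  shows "(1 + x) ^ n * legendre_P n ((3 - x) / (1 + x)) =
    (\<Sum>i\<le>n. of_nat ((n choose i)\<^sup>2) * 2 ^ (n - i) * (1 - x) ^ i)"
proof -
  define y where "y = (3 - x) / (1 + x)"
  have "1 + x \<noteq> 0" using assms by (metis add.commute add_eq_0_iff)
  then have y: "(y + 1) * (1 + x) = 4" "(y - 1) * (1 + x) = 2 * (1 - x)"
    unfolding y_def by (simp_all add: field_simps)
  have "2 ^ n * ((1 + x) ^ n * legendre_P n y) =
      (\<Sum>i\<le>n. of_nat ((n choose i)\<^sup>2) * ((y + 1) * (1 + x)) ^ (n - i) * ((y - 1) * (1 + x)) ^ i)"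
    unfolding mult.left_commute[of "2 ^ n"] legendre_P_sum_squares sum_distrib_left
  proof (intro sum.cong refl)
    fix i assume "i \<in> {..n}"
    then have "(1 + x) ^ n = (1 + x) ^ (n - i) * (1 + x) ^ i" by (simp flip: power_add)
    then show "(1 + x) ^ n * (of_nat ((n choose i)\<^sup>2) * (y + 1) ^ (n - i) * (y - 1) ^ i) =
        of_nat ((n choose i)\<^sup>2) * ((y + 1) * (1 + x)) ^ (n - i) * ((y - 1) * (1 + x)) ^ i"
      by (simp add: power_mult_distrib mult_ac)
  qed
  also have "\<dots> = 2 ^ n * (\<Sum>i\<le>n. of_nat ((n choose i)\<^sup>2) * 2 ^ (n - i) * (1 - x) ^ i)"
    unfolding y sum_distrib_left
  proof (intro sum.cong refl)
    fix i assume "i \<in> {..n}"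
    have four: "(4 :: rat) ^ (n - i) = 2 ^ (n - i) * 2 ^ (n - i)" by (simp flip: power_mult_distrib)
    have two: "(2 :: rat) ^ (n - i) * 2 ^ i = 2 ^ n" using \<open>i \<in> {..n}\<close> by (simp flip: power_add)
    show "of_nat ((n choose i)\<^sup>2) * 4 ^ (n - i) * (2 * (1 - x)) ^ i =
        2 ^ n * (of_nat ((n choose i)\<^sup>2) * 2 ^ (n - i) * (1 - x) ^ i)"
      unfolding four power_mult_distrib two[symmetric] by (simp only: mult_ac)
  qed
  finally show ?thesis unfolding y_def by simp
qed

lemma legendre_P_half_prime_cong:
  fixes p :: int
  assumes p: "prime p" "p = 2 * int n + 1" and x: "in_Zp p x"
  shows "cong_Zp (2 ^ n * legendre_P n x) (\<Sum>i\<le>n. of_nat ((n choose i)\<^sup>2) * 2 ^ (n - i) * (1 - x) ^ i) p"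
proof -
  define c where "c i = of_nat (n choose i) * 2 ^ (n - i) * (x - 1) ^ i" for i
  have "2 ^ n * legendre_P n x = (\<Sum>i\<le>n. c i * of_int (int (n + i choose i)))"
    unfolding legendre_P_sum_shift c_def by (simp add: mult_ac)
  moreover have "cong_Zp (\<Sum>i\<le>n. c i * of_int (int (n + i choose i)))
      (\<Sum>i\<le>n. c i * of_int ((-1) ^ i * int (n choose i))) p"
  proof (rule cong_Zp_sum[OF p(1)])
    fix i assume "i \<in> {..n}"
    have "in_Zp p (c i)"
      unfolding c_def using Zp_one[OF p(1)]
      by (intro Zp_mult[OF p(1)] Zp_power[OF p(1)] Zp_diff[OF p(1)] Zp_of_nat[OF p(1)] Zp_numeral[OF p(1)] x)
    moreover have "cong_Zp (of_int (int (n + i choose i))) (of_int ((-1) ^ i * int (n choose i))) p"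
      unfolding cong_Zp_of_int_iff[OF p(1)] using binomial_half_prime_cong[OF p] \<open>i \<in> {..n}\<close> by simp
    ultimately show "cong_Zp (c i * of_int (int (n + i choose i))) (c i * of_int ((-1) ^ i * int (n choose i))) p"
      by (rule cong_Zp_mult_left[OF p(1)])
  qed
  moreover have "(\<Sum>i\<le>n. c i * of_int ((-1) ^ i * int (n choose i))) =
      (\<Sum>i\<le>n. of_nat ((n choose i)\<^sup>2) * 2 ^ (n - i) * (1 - x) ^ i)"
  proof (intro sum.cong refl)
    fix i
    have "(x - 1) ^ i * (-1) ^ i = (1 - x) ^ i" by (simp flip: power_mult_distrib)
    then show "c i * of_int ((-1) ^ i * int (n choose i)) = of_nat ((n choose i)\<^sup>2) * 2 ^ (n - i) * (1 - x) ^ i"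
      unfolding c_def by (simp add: power2_eq_square mult_ac)
  qed
  ultimately show ?thesis by simp
qed

lemma Zp_legendre_P:
  fixes p :: int
  assumes p: "prime p" "odd p" and z: "in_Zp p z"
  shows "in_Zp p (legendre_P n z)"
proof -
  have "in_Zp p (1 / 2)"
    using in_Zp_iff[OF p(1)] p(2) by (metis coprime_left_2_iff_odd of_int_1 of_int_numeral)
  then have "in_Zp p ((1 / 2) ^ n * (2 ^ n * legendre_P n z))"
    unfolding legendre_P_sum_squares using Zp_one[OF p(1)]
    by (intro Zp_mult[OF p(1)] Zp_power[OF p(1)] Zp_sum[OF p(1)] Zp_add[OF p(1)] Zp_diff[OF p(1)]
        Zp_of_nat[OF p(1)] z)
  then show ?thesis by (simp add: power_one_over)
qed

theorem theorem2p6: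
  fixes p :: int and x :: rat
  assumes "prime p" and "odd p"
    and "in_Zp p x"
    and "\<not> cong_Zp x (-1) p"
  shows "cong_Zp (legendre_P (nat ((p - 1) div 2)) x)
           (of_int (Legendre_Zp (2 * (x + 1)) p) *
            legendre_P (nat ((p - 1) div 2)) ((3 - x) / (1 + x))) p"
proof -
  note p = assms(1) and x = assms(3)
  define n where "n = nat ((p - 1) div 2)"
  define y where "y = (3 - x) / (1 + x)"
  define q where "q = 2 * (x + 1)"
  have pn: "p = 2 * int n + 1"
    using assms(2) prime_gt_1_int[OF p] unfolding n_def by (auto elim!: oddE)
  have "x \<noteq> -1" using assms(4) cong_Zp_refl[OF p] by blast
  have "\<not> cong_Zp (1 + x) 0 p"
    using assms(4) unfolding cong_Zp_def by (simp add: add.commute)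
  then have y: "in_Zp p y"
    unfolding y_def by (intro Zp_divide[OF p] Zp_diff[OF p] Zp_add[OF p] Zp_numeral[OF p] Zp_one[OF p] x)
  have q: "in_Zp p q"
    unfolding q_def by (intro Zp_mult[OF p] Zp_numeral[OF p] Zp_add[OF p] Zp_one[OF p] x)
  have "cong_Zp (2 ^ n * legendre_P n x) ((1 + x) ^ n * legendre_P n y) p"
    using legendre_P_half_prime_cong[OF p pn x] legendre_P_moebius[OF \<open>x \<noteq> -1\<close>] unfolding y_def by simp
  then have "cong_Zp (2 ^ n * (2 ^ n * legendre_P n x)) (2 ^ n * ((1 + x) ^ n * legendre_P n y)) p"
    by (rule cong_Zp_mult_left[OF p Zp_power[OF p Zp_numeral[OF p]]])
  moreover have "(4 :: rat) ^ n = 2 ^ n * 2 ^ n" "q ^ n = 2 ^ n * (1 + x) ^ n"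
    unfolding q_def by (simp_all add: add.commute flip: power_mult_distrib)
  ultimately have main: "cong_Zp (4 ^ n * legendre_P n x) (q ^ n * legendre_P n y) p"
    by (simp only: mult.assoc)
  have "cong_Zp 1 (4 ^ n) p"
    using four_power_half_prime_cong[OF p pn] cong_Zp_of_int_iff[OF p, of 1 "4 ^ n"] by (simp add: cong_sym_eq)
  then have fermat: "cong_Zp (legendre_P n x) (4 ^ n * legendre_P n x) p"
    using cong_Zp_mult[OF p Zp_one[OF p] Zp_legendre_P[OF p assms(2) x] _ cong_Zp_refl[OF p]] by simp
  have euler: "cong_Zp (q ^ n * legendre_P n y) (of_int (Legendre_Zp q p) * legendre_P n y) p"
    using cong_Zp_mult[OF p Zp_power[OF p q] Zp_legendre_P[OF p assms(2) y]
        cong_Zp_Legendre_Zp[OF p assms(2) q, folded n_def] cong_Zp_refl[OF p]] .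
  show ?thesis
    using cong_Zp_trans[OF p fermat cong_Zp_trans[OF p main euler]] unfolding n_def y_def q_def .
qed

end
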